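(* Let $g:\mathbb{R}^n\to\mathbb{R}\cup\{+\infty\}$ be a proper closed convex function and let $f=f_1-f_2$, where $f_1,f_2:\mathbb{R}^n\to\mathbb{R}$ are convex differentiable functions such that $\nabla f_1$ is Lipschitz continuous with modulus $L>0$, $\nabla f_2$ is Lipschitz continuous with modulus $l\ge 0$, and $L\ge l$. Let $F=f+g$, and assume $\inf F>-\infty$ and that this infimum is attained. Let $\{x^k\}$ be generated by Algorithm 1 (described in the context), let $\bar\beta=\sup_k\beta_k$, and let $\alpha\in\big[\tfrac{L+l}{2}\bar\beta^2,\tfrac L2\big]$. Then: (i) the sequence $\{H_{k,\alpha}\}$ is convergent; (ii) $\sum_{k=0}^\infty\big(\alpha-\tfrac{L+l}{2}\beta_{k+1}^2\big)\|x^{k+1}-x^k\|^2<\infty$.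
   Context: For a proper closed convex $h$, $\mathrm{Prox}_h(v)=\arg\min_{x\in\mathbb{R}^n}\{h(x)+\tfrac12\|x-v\|^2\}$. Algorithm 1 (proximal gradient algorithm with extrapolation): choose $x^0\in\operatorname{dom} g$ and $\{\beta_k\}\subseteq[0,\sqrt{L/(L+l)}]$, set $x^{-1}=x^0$, and for $k=0,1,2,\dots$ set $y^k=x^k+\beta_k(x^k-x^{k-1})$ and $x^{k+1}=\mathrm{Prox}_{\frac1L g}\big(y^k-\tfrac1L\nabla f(y^k)\big)$. For $\alpha\ge0$, $H_{k,\alpha}:=F(x^k)+\alpha\|x^k-x^{k-1}\|^2$. *)

theory Defs
  imports "HOL-Analysis.Analysis"
begin

definition epigraph_e :: "('a \<Rightarrow> ereal) \<Rightarrow> ('a \<times> real) set" where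
  "epigraph_e g = {(x, t). g x \<le> ereal t}"

definition proper_fun :: "('a \<Rightarrow> ereal) \<Rightarrow> bool" where
  "proper_fun g \<longleftrightarrow> (\<forall>x. g x \<noteq> -\<infinity>) \<and> (\<exists>x. g x < \<infinity>)"

definition closed_fun :: "('a::topological_space \<Rightarrow> ereal) \<Rightarrow> bool" where
  "closed_fun g \<longleftrightarrow> closed (epigraph_e g)"

definition convex_fun :: "('a::real_vector \<Rightarrow> ereal) \<Rightarrow> bool" where
  "convex_fun g \<longleftrightarrow> convex (epigraph_e g)"

definition prox :: "('a::real_normed_vector \<Rightarrow> ereal) \<Rightarrow> 'a \<Rightarrow> 'a" where
  "prox h v = (SOME x. \<forall>z. h x + ereal (1/2 * (norm (x - v))\<^sup>2) \<le> h z + ereal (1/2 * (norm (z - v))\<^sup>2))"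

end

theory Submission
  imports Defs
begin

text \<open>
  For p = prox of (1/L) g at y - (1/L)(\<nabla>f1 y - \<nabla>f2 y), the variational inequality of the
  proximal point, the descent lemma for the L-smooth f1, the l-smooth upper bound for f2 and the
  gradient inequalities for the convex f1, f2 combine to
  F(p) \<le> F(z) + (L + l)/2 ||z - y||^2 - L/2 ||z - p||^2  for every z in dom g.
  With z = x^k, y = y^k and \<alpha> \<le> L/2 this reads
  H_{k+1,\<alpha>} + (\<alpha> - (L + l)/2 \<beta>_k^2) ||x^k - x^{k-1}||^2 \<le> H_{k,\<alpha>},
  where the subtracted term is nonnegative by the choice of \<alpha>. Since H_{k,\<alpha>} \<ge> inf F > -\<infinity>,
  the sequence H_{k,\<alpha>} decreases to a limit and the decrements telescope to a finite sum.
  The iteration is well defined because proper closed convex functions have proximal points: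
  such a function is bounded below by an affine function of ||z - z0||, so the proximal
  objective is coercive and attains its minimum on a compact slice of the epigraph.
\<close>

lemma has_real_derivative_along_line:
  fixes f :: "'a::real_inner \<Rightarrow> real"
  assumes "\<And>z. (f has_derivative (\<lambda>h. f' z \<bullet> h)) (at z)"
  shows "((\<lambda>t. f (y + t *\<^sub>R d)) has_real_derivative (f' (y + t *\<^sub>R d) \<bullet> d)) (at t)"
proof -
  have "((\<lambda>t. y + t *\<^sub>R d) has_derivative (\<lambda>h. h *\<^sub>R d)) (at t)"
    by (auto intro!: derivative_eq_intros)
  from diff_chain_at[OF this assms]
  show ?thesis
    by (simp add: has_field_derivative_def o_def mult_commute_abs)
qed

lemma convex_on_gradient_ineq:
  fixes f :: "'a::real_inner \<Rightarrow> real"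
  assumes convex: "convex_on UNIV f"
    and deriv: "\<And>z. (f has_derivative (\<lambda>h. f' z \<bullet> h)) (at z)"
  shows "f y + f' y \<bullet> (w - y) \<le> f w"
proof -
  define d where "d = w - y"
  define \<phi> where "\<phi> t = f (y + t *\<^sub>R d)" for t
  have "convex_on UNIV \<phi>"
  proof (rule convex_onI)
    fix t a b :: real assume "0 < t" "t < 1"
    moreover have "y + ((1 - t) *\<^sub>R a + t *\<^sub>R b) *\<^sub>R d = (1 - t) *\<^sub>R (y + a *\<^sub>R d) + t *\<^sub>R (y + b *\<^sub>R d)"
      by (simp add: algebra_simps)
    ultimately show "\<phi> ((1 - t) *\<^sub>R a + t *\<^sub>R b) \<le> (1 - t) * \<phi> a + t * \<phi> b"
      using convex_onD[OF convex, of t "y + a *\<^sub>R d" "y + b *\<^sub>R d"] by (simp add: \<phi>_def)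
  qed simp
  moreover have "(\<phi> has_real_derivative f' y \<bullet> d) (at 0 within UNIV)"
    using has_real_derivative_along_line[OF deriv, of y d 0] by (simp add: \<phi>_def[abs_def])
  ultimately have "f' y \<bullet> d \<le> \<phi> 1 - \<phi> 0"
    using convex_on_imp_above_tangent[of UNIV \<phi> 0 1 "f' y \<bullet> d"] by simp
  then show ?thesis
    by (simp add: \<phi>_def d_def)
qed

lemma lipschitz_gradient_upper_bound:
  fixes f :: "'a::real_inner \<Rightarrow> real"
  assumes deriv: "\<And>z. (f has_derivative (\<lambda>h. f' z \<bullet> h)) (at z)"
    and lip: "L-lipschitz_on UNIV f'"
  shows "f w \<le> f y + f' y \<bullet> (w - y) + L / 2 * (norm (w - y))\<^sup>2"
proof -
  define d where "d = w - y"
  define \<psi> where "\<psi> t = f (y + t *\<^sub>R d) - t * (f' y \<bullet> d) - L / 2 * t\<^sup>2 * (norm d)\<^sup>2" for t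
  have "\<psi> 1 \<le> \<psi> 0"
  proof (rule DERIV_nonpos_imp_nonincreasing[of 0 1])
    fix t :: real assume t: "0 \<le> t" "t \<le> 1"
    have "(f' (y + t *\<^sub>R d) - f' y) \<bullet> d \<le> norm (f' (y + t *\<^sub>R d) - f' y) * norm d"
      by (rule norm_cauchy_schwarz)
    also have "\<dots> \<le> L * norm (t *\<^sub>R d) * norm d"
      using lipschitz_onD[OF lip, of "y + t *\<^sub>R d" y] by (simp add: dist_norm mult_right_mono)
    also have "\<dots> = L * t * (norm d)\<^sup>2"
      using t by (simp add: power2_eq_square)
    finally have "f' (y + t *\<^sub>R d) \<bullet> d - f' y \<bullet> d - L * t * (norm d)\<^sup>2 \<le> 0"
      by (simp add: inner_diff_left)
    moreover have "(\<psi> has_real_derivative f' (y + t *\<^sub>R d) \<bullet> d - f' y \<bullet> d - L * t * (norm d)\<^sup>2) (at t)"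
      unfolding \<psi>_def
      by (auto intro!: derivative_eq_intros has_real_derivative_along_line[OF deriv])
    ultimately show "\<exists>D. (\<psi> has_real_derivative D) (at t) \<and> D \<le> 0"
      by blast
  qed simp
  then show ?thesis
    by (simp add: \<psi>_def d_def)
qed

lemma proper_funE:
  assumes "proper_fun g" "g z \<noteq> \<infinity>"
  obtains a where "g z = ereal a"
  using assms by (cases "g z") (auto simp: proper_fun_def)

lemma convex_funD:
  assumes "convex_fun g" "g z \<le> ereal a" "g w \<le> ereal b" "0 \<le> t" "t \<le> 1"
  shows "g ((1 - t) *\<^sub>R z + t *\<^sub>R w) \<le> ereal ((1 - t) * a + t * b)"
proof -
  have "(z, a) \<in> epigraph_e g" "(w, b) \<in> epigraph_e g"
    using assms(2,3) by (auto simp: epigraph_e_def)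
  from convexD[OF assms(1)[unfolded convex_fun_def] this, of "1 - t" t] assms(4,5)
  show ?thesis
    by (simp add: epigraph_e_def)
qed

lemma closed_fun_bounded_below_on_compact:
  fixes g :: "'a::metric_space \<Rightarrow> ereal"
  assumes proper: "proper_fun g" and closed: "closed_fun g" and "compact S"
  shows "\<exists>m. \<forall>z\<in>S. ereal m \<le> g z"
proof -
  define t where "t z = (if g z = \<infinity> then 0 else real_of_ereal (g z) - 1)" for z
  have t_below: "ereal (t z) < g z" for z
    by (cases "g z = \<infinity>") (auto simp: t_def elim: proper_funE[OF proper])
  have "\<exists>e>0. \<forall>w. dist w z < e \<longrightarrow> ereal (t z) < g w" for z
  proof -
    have "(z, t z) \<in> - epigraph_e g"
      using t_below[of z] by (simp add: epigraph_e_def not_le)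
    moreover have "open (- epigraph_e g)"
      using closed by (simp add: closed_fun_def closed_def)
    ultimately obtain e where "e > 0" and e: "\<And>q. dist q (z, t z) < e \<Longrightarrow> q \<in> - epigraph_e g"
      unfolding open_dist by blast
    then show ?thesis
      by (auto intro!: exI[of _ e] simp: dist_Pair_Pair epigraph_e_def not_le dest!: e[of "(_, t z)"])
  qed
  then obtain e where e_pos: "\<And>z. e z > 0" and e: "\<And>z w. dist w z < e z \<Longrightarrow> ereal (t z) < g w"
    by metis
  obtain C where C: "C \<subseteq> S" "finite C" "S \<subseteq> (\<Union>z\<in>C. ball z (e z))"
    using compactE_image[OF \<open>compact S\<close>, of S "\<lambda>z. ball z (e z)"] e_pos by force
  show ?thesis
  proof (intro exI[of _ "Min (insert 0 (t ` C))"] ballI)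
    fix w assume "w \<in> S"
    then obtain z where "z \<in> C" "dist w z < e z"
      using C(3) by (auto simp: dist_commute)
    then have "Min (insert 0 (t ` C)) \<le> t z" "ereal (t z) < g w"
      using C(2) e by auto
    then show "ereal (Min (insert 0 (t ` C))) \<le> g w"
      by (meson ereal_less_eq(3) less_imp_le order_trans)
  qed
qed

lemma convex_fun_bound_beyond_sphere:
  fixes g :: "'a::real_normed_vector \<Rightarrow> ereal"
  assumes convex: "convex_fun g" and g_z0: "g z0 = ereal g0" and g_z: "g z = ereal a"
    and sphere: "\<And>w. norm (w - z0) = 1 \<Longrightarrow> ereal m \<le> g w" and far: "1 < norm (z - z0)"
  shows "norm (z - z0) * m \<le> (norm (z - z0) - 1) * g0 + a"
proof -
  define r where "r = norm (z - z0)"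
  have "1 < r"
    using far by (simp add: r_def)
  define w where "w = (1 - 1 / r) *\<^sub>R z0 + (1 / r) *\<^sub>R z"
  have "w - z0 = (1 / r) *\<^sub>R (z - z0)"
    by (simp add: w_def algebra_simps)
  then have "ereal m \<le> g w"
    using \<open>1 < r\<close> by (intro sphere) (auto simp: r_def)
  also have "g w \<le> ereal ((1 - 1 / r) * g0 + (1 / r) * a)"
    unfolding w_def using \<open>1 < r\<close> g_z0 g_z by (intro convex_funD[OF convex]) auto
  finally have "r * m \<le> r * ((1 - 1 / r) * g0 + (1 / r) * a)"
    using \<open>1 < r\<close> by (intro mult_left_mono) auto
  also have "\<dots> = (r - 1) * g0 + a"
    using \<open>1 < r\<close> by (simp add: field_simps)
  finally show ?thesis
    by (simp add: r_def)
qed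

lemma convex_fun_linear_growth_lower_bound:
  fixes g :: "'a::euclidean_space \<Rightarrow> ereal"
  assumes proper: "proper_fun g" and closed: "closed_fun g" and convex: "convex_fun g"
    and g_z0: "g z0 = ereal g0"
  obtains m C where "C \<ge> 0" "\<And>z. ereal (m - C * norm (z - z0)) \<le> g z"
proof -
  obtain m1 where "\<forall>z\<in>cball z0 1. ereal m1 \<le> g z"
    using closed_fun_bounded_below_on_compact[OF proper closed compact_cball] by blast
  then have m1: "\<And>z. norm (z - z0) \<le> 1 \<Longrightarrow> ereal m1 \<le> g z"
    by (simp add: dist_norm norm_minus_commute)
  define m where "m = min m1 g0"
  have "ereal (m - (g0 - m) * norm (z - z0)) \<le> g z" for z
  proof (cases "norm (z - z0) \<le> 1")
    case True
    have "0 \<le> (g0 - m) * norm (z - z0)" "m \<le> m1"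
      by (simp_all add: m_def)
    then have "m - (g0 - m) * norm (z - z0) \<le> m1"
      by linarith
    then show ?thesis
      using m1[OF True] by (meson ereal_less_eq(3) order_trans)
  next
    case False
    show ?thesis
    proof (cases "g z = \<infinity>")
      case False
      then obtain a where a: "g z = ereal a"
        using proper by (auto elim: proper_funE)
      have "norm (z - z0) * m1 \<le> (norm (z - z0) - 1) * g0 + a"
        using \<open>\<not> norm (z - z0) \<le> 1\<close> by (intro convex_fun_bound_beyond_sphere[OF convex g_z0 a]) (auto intro: m1)
      moreover have m_le: "m \<le> m1" "m \<le> g0"
        by (simp_all add: m_def)
      ultimately have "norm (z - z0) * m \<le> (norm (z - z0) - 1) * g0 + a"
        using mult_left_mono[OF m_le(1) norm_ge_zero, of "z - z0"] by linarith
      then show ?thesis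
        using a m_le(2) by (simp add: algebra_simps)
    qed simp
  qed
  then show ?thesis
    by (intro that[of "g0 - m" m]) (auto simp: m_def)
qed

lemma quadratic_dominates_affine:
  fixes a q :: real
  obtains R where "R \<ge> 0" "\<And>r. R < r \<Longrightarrow> a * r + q < r\<^sup>2 / 4"
proof
  fix r :: real
  assume r: "4 * \<bar>a\<bar> + 4 * \<bar>q\<bar> + 4 < r"
  have "a * r \<le> \<bar>a\<bar> * r" "\<bar>q\<bar> * 1 \<le> \<bar>q\<bar> * r"
    using r by (intro mult_right_mono mult_left_mono; simp)+
  then have "a * r + q \<le> r * (\<bar>a\<bar> + \<bar>q\<bar>)"
    by (simp add: algebra_simps)
  also have "\<dots> < r * (r / 4)"
    using r by (intro mult_strict_left_mono) auto
  finally show "a * r + q < r\<^sup>2 / 4"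
    by (simp add: power2_eq_square)
qed simp

lemma compact_epigraph_slice:
  fixes g :: "'a::heine_borel \<Rightarrow> ereal"
  assumes proper: "proper_fun g" and closed: "closed_fun g"
  shows "compact (epigraph_e g \<inter> (cball z0 R \<times> {..T}))"
proof -
  obtain m where m: "\<forall>z\<in>cball z0 R. ereal m \<le> g z"
    using closed_fun_bounded_below_on_compact[OF proper closed compact_cball] by blast
  have "epigraph_e g \<inter> (cball z0 R \<times> {..T}) \<subseteq> cball z0 R \<times> {m..T}"
  proof
    fix q assume q: "q \<in> epigraph_e g \<inter> (cball z0 R \<times> {..T})"
    obtain z s where q_eq: "q = (z, s)"
      by fastforce
    then have "g z \<le> ereal s" "z \<in> cball z0 R" "s \<le> T"
      using q by (auto simp: epigraph_e_def)
    moreover have "ereal m \<le> ereal s"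
      using m calculation(1,2) order_trans by blast
    ultimately show "q \<in> cball z0 R \<times> {m..T}"
      by (simp add: q_eq)
  qed
  then have "bounded (epigraph_e g \<inter> (cball z0 R \<times> {..T}))"
    by (rule bounded_subset[OF bounded_Times[OF bounded_cball bounded_closed_interval]])
  moreover have "closed (epigraph_e g \<inter> (cball z0 R \<times> {..T}))"
    using closed by (intro closed_Int closed_Times) (auto simp: closed_fun_def)
  ultimately show ?thesis
    by (simp add: compact_eq_bounded_closed)
qed

lemma prox_objective_coercive:
  fixes g :: "'a::euclidean_space \<Rightarrow> ereal"
  assumes proper: "proper_fun g" and closed: "closed_fun g" and convex: "convex_fun g"
    and g_z0: "g z0 = ereal g0" and "c > 0"
  obtains R where "R \<ge> 0"
    "\<And>z a. g z = ereal a \<Longrightarrow> R < norm (z - z0) \<Longrightarrow> B < c * a + 1/2 * (norm (z - v))\<^sup>2"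
proof -
  obtain m C where "C \<ge> 0" and m: "\<And>z. ereal (m - C * norm (z - z0)) \<le> g z"
    using convex_fun_linear_growth_lower_bound[OF proper closed convex g_z0] by blast
  define d where "d = norm (v - z0)"
  obtain R where "R \<ge> 0" and R: "\<And>r. R < r \<Longrightarrow> c * C * r + (B - c * m + d\<^sup>2 / 2) < r\<^sup>2 / 4"
    using quadratic_dominates_affine[of "c * C" "B - c * m + d\<^sup>2 / 2"] by blast
  show ?thesis
  proof (rule that[OF \<open>R \<ge> 0\<close>])
    fix z a assume a: "g z = ereal a" and far: "R < norm (z - z0)"
    define r where "r = norm (z - z0)"
    have "r \<le> norm (z - v) + d"
      using dist_triangle[of z z0 v] by (simp add: r_def d_def dist_norm)
    then have "r\<^sup>2 \<le> (norm (z - v) + d)\<^sup>2"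
      by (rule power_mono) (simp add: r_def)
    also have "\<dots> \<le> 2 * (norm (z - v))\<^sup>2 + 2 * d\<^sup>2"
      using zero_le_power2[of "norm (z - v) - d"] unfolding power2_sum power2_diff by linarith
    finally have "r\<^sup>2 \<le> 2 * (norm (z - v))\<^sup>2 + 2 * d\<^sup>2" .
    moreover have "m - C * r \<le> a"
      using m[of z] a by (simp add: r_def)
    then have "c * (m - C * r) \<le> c * a"
      using \<open>c > 0\<close> by (simp add: mult_left_mono)
    then have "c * m - c * C * r \<le> c * a"
      by (simp add: algebra_simps)
    moreover have "c * C * r + (B - c * m + d\<^sup>2 / 2) < r\<^sup>2 / 4"
      using R far by (simp add: r_def)
    ultimately show "B < c * a + 1/2 * (norm (z - v))\<^sup>2"
      by linarith
  qed
qed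

lemma prox_objective_attains_min_on_epigraph:
  fixes g :: "'a::euclidean_space \<Rightarrow> ereal"
  assumes proper: "proper_fun g" and closed: "closed_fun g" and convex: "convex_fun g" and "c > 0"
  obtains p s where "g p \<le> ereal s"
    "\<And>z a. g z = ereal a \<Longrightarrow> c * s + 1/2 * (norm (p - v))\<^sup>2 \<le> c * a + 1/2 * (norm (z - v))\<^sup>2"
proof -
  obtain z0 where "g z0 \<noteq> \<infinity>"
    using proper by (auto simp: proper_fun_def)
  then obtain g0 where g_z0: "g z0 = ereal g0"
    using proper by (auto elim: proper_funE)
  define \<Phi>0 where "\<Phi>0 = c * g0 + 1/2 * (norm (z0 - v))\<^sup>2"
  obtain R where "R \<ge> 0" and far:
    "\<And>z a. g z = ereal a \<Longrightarrow> R < norm (z - z0) \<Longrightarrow> \<Phi>0 < c * a + 1/2 * (norm (z - v))\<^sup>2"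
    using prox_objective_coercive[OF proper closed convex g_z0 \<open>c > 0\<close>] by blast
  \<comment> \<open>On the epigraph the objective is continuous; pairs outside this compact slice do worse than (z0, g0).\<close>
  define K where "K = epigraph_e g \<inter> (cball z0 R \<times> {..\<Phi>0 / c})"
  define h where "h q = c * snd q + 1/2 * (norm (fst q - v))\<^sup>2" for q
  have outside: "\<Phi>0 < c * a + 1/2 * (norm (z - v))\<^sup>2" if "g z = ereal a" "(z, a) \<notin> K" for z a
  proof -
    have "R < norm (z - z0) \<or> \<Phi>0 < c * a"
      using that \<open>c > 0\<close> by (auto simp: K_def epigraph_e_def dist_norm norm_minus_commute field_simps)
    then show ?thesis
    proof
      assume "\<Phi>0 < c * a"
      then show ?thesis
        using zero_le_power2[of "norm (z - v)"] by linarith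
    qed (rule far[OF that(1)])
  qed
  have "(z0, g0) \<in> K"
    using \<open>R \<ge> 0\<close> \<open>c > 0\<close> by (simp add: K_def epigraph_e_def g_z0 \<Phi>0_def field_simps)
  moreover have "compact K"
    unfolding K_def by (rule compact_epigraph_slice[OF proper closed])
  moreover have "continuous_on K h"
    unfolding h_def by (auto intro!: continuous_intros)
  ultimately obtain q where "q \<in> K" and q_min: "\<And>y. y \<in> K \<Longrightarrow> h q \<le> h y"
    using continuous_attains_inf[of K h] by blast
  have "h q \<le> h (z, a)" if "g z = ereal a" for z a
  proof (cases "(z, a) \<in> K")
    case False
    then show ?thesis
      using q_min[OF \<open>(z0, g0) \<in> K\<close>] outside[OF that] by (simp add: h_def \<Phi>0_def)
  qed (rule q_min)
  moreover obtain p s where "q = (p, s)"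
    by fastforce
  ultimately show ?thesis
    using \<open>q \<in> K\<close> by (intro that[of p s]) (auto simp: K_def epigraph_e_def h_def)
qed

lemma prox_minimizer_exists:
  fixes g :: "'a::euclidean_space \<Rightarrow> ereal"
  assumes proper: "proper_fun g" and closed: "closed_fun g" and convex: "convex_fun g" and "c > 0"
  shows "\<exists>p. \<forall>z. ereal c * g p + ereal (1/2 * (norm (p - v))\<^sup>2)
                 \<le> ereal c * g z + ereal (1/2 * (norm (z - v))\<^sup>2)"
proof -
  obtain p s where "g p \<le> ereal s" and p_min:
    "\<And>z a. g z = ereal a \<Longrightarrow> c * s + 1/2 * (norm (p - v))\<^sup>2 \<le> c * a + 1/2 * (norm (z - v))\<^sup>2"
    using prox_objective_attains_min_on_epigraph[OF assms] by blast
  have "ereal c * g p \<le> ereal c * ereal s"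
    using \<open>g p \<le> ereal s\<close> \<open>c > 0\<close> by (intro ereal_mult_left_mono) auto
  then have "ereal c * g p + ereal (1/2 * (norm (p - v))\<^sup>2) \<le> ereal c * ereal s + ereal (1/2 * (norm (p - v))\<^sup>2)"
    by (rule add_right_mono)
  moreover have "ereal c * ereal s + ereal (1/2 * (norm (p - v))\<^sup>2) \<le> ereal c * g z + ereal (1/2 * (norm (z - v))\<^sup>2)" for z
    using p_min[of z] \<open>c > 0\<close> proper by (cases "g z") (auto simp: proper_fun_def)
  ultimately show ?thesis
    by (blast intro: order_trans)
qed

lemma prox_minimizes:
  fixes g :: "'a::euclidean_space \<Rightarrow> ereal"
  assumes "proper_fun g" "closed_fun g" "convex_fun g" "c > 0"
  shows "ereal c * g (prox (\<lambda>z. ereal c * g z) v) + ereal (1/2 * (norm (prox (\<lambda>z. ereal c * g z) v - v))\<^sup>2)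
           \<le> ereal c * g z + ereal (1/2 * (norm (z - v))\<^sup>2)"
  using someI_ex[OF prox_minimizer_exists[OF assms]] unfolding prox_def by blast

lemma prox_in_dom:
  fixes g :: "'a::euclidean_space \<Rightarrow> ereal"
  assumes "proper_fun g" "closed_fun g" "convex_fun g" "c > 0"
  shows "g (prox (\<lambda>z. ereal c * g z) v) \<noteq> \<infinity>"
proof
  obtain z where "g z \<noteq> \<infinity>"
    using assms(1) by (auto simp: proper_fun_def)
  moreover assume "g (prox (\<lambda>z. ereal c * g z) v) = \<infinity>"
  ultimately show False
    using prox_minimizes[OF assms, of v z] \<open>c > 0\<close> by auto
qed

lemma prox_variational_ineq:
  fixes g :: "'a::real_inner \<Rightarrow> ereal"
  assumes convex: "convex_fun g" and "c > 0"
    and p_min: "\<And>z. ereal c * g p + ereal (1/2 * (norm (p - v))\<^sup>2) \<le> ereal c * g z + ereal (1/2 * (norm (z - v))\<^sup>2)"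
    and g_p: "g p = ereal a" and g_z: "g z = ereal b"
  shows "c * a \<le> c * b + (p - v) \<bullet> (z - p)"
proof -
  define A where "A = c * b - c * a + (p - v) \<bullet> (z - p)"
  define D where "D = (norm (z - p))\<^sup>2 / 2"
  \<comment> \<open>Compare p with the points of the segment from p to z and let them tend to p.\<close>
  have "0 \<le> A + t * D" if t: "0 < t" "t < 1" for t
  proof -
    define zt where "zt = (1 - t) *\<^sub>R p + t *\<^sub>R z"
    have "g zt \<le> ereal ((1 - t) * a + t * b)"
      unfolding zt_def using g_p g_z t by (intro convex_funD[OF convex]) auto
    then have "ereal c * g zt \<le> ereal (c * ((1 - t) * a + t * b))"
      using \<open>c > 0\<close> ereal_mult_left_mono[of "g zt" _ "ereal c"] by fastforce
    then have "ereal c * g zt + ereal (1/2 * (norm (zt - v))\<^sup>2)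
        \<le> ereal (c * ((1 - t) * a + t * b)) + ereal (1/2 * (norm (zt - v))\<^sup>2)"
      by (rule add_right_mono)
    from order_trans[OF p_min[of zt] this]
    have "c * a + 1/2 * (norm (p - v))\<^sup>2 \<le> c * ((1 - t) * a + t * b) + 1/2 * (norm (zt - v))\<^sup>2"
      using g_p by simp
    moreover have "(norm (zt - v))\<^sup>2 = (norm (p - v))\<^sup>2 + 2 * t * ((p - v) \<bullet> (z - p)) + t\<^sup>2 * (norm (z - p))\<^sup>2"
      unfolding power2_norm_eq_inner zt_def
      by (simp add: algebra_simps inner_commute power2_eq_square)
    ultimately have "0 \<le> t * (A + t * D)"
      by (simp add: A_def D_def algebra_simps power2_eq_square)
    then show ?thesis
      using t by (simp add: zero_le_mult_iff)
  qed
  then have "\<forall>\<^sub>F t in at_right 0. 0 \<le> A + t * D"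
    by (auto simp: eventually_at_right_field intro: exI[of _ 1])
  moreover have "((\<lambda>t. A + t * D) \<longlongrightarrow> A) (at_right 0)"
    by (auto intro!: tendsto_eq_intros)
  ultimately have "0 \<le> A"
    by (intro tendsto_lowerbound) auto
  then show ?thesis
    by (simp add: A_def)
qed

lemma prox_grad_step_optimality:
  fixes g :: "'a::euclidean_space \<Rightarrow> ereal"
  assumes proper: "proper_fun g" and closed: "closed_fun g" and convex: "convex_fun g" and "L > 0"
    and p_eq: "p = prox (\<lambda>z. ereal (1 / L) * g z) (y - (1 / L) *\<^sub>R G)"
    and g_p: "g p = ereal a" and g_z: "g z = ereal b"
  shows "a \<le> b + L * ((p - y) \<bullet> (z - p)) + G \<bullet> (z - p)"
proof -
  define v where "v = y - (1 / L) *\<^sub>R G"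
  have "1 / L * a \<le> 1 / L * b + (p - v) \<bullet> (z - p)"
    using \<open>L > 0\<close> prox_minimizes[OF proper closed convex, of "1 / L" v] g_p g_z
    by (intro prox_variational_ineq[OF convex]) (auto simp: p_eq v_def)
  then have "a \<le> b + L * ((p - v) \<bullet> (z - p))"
    using \<open>L > 0\<close> by (simp add: field_simps)
  moreover have "p - v = (p - y) + (1 / L) *\<^sub>R G"
    by (simp add: v_def)
  then have "L * ((p - v) \<bullet> (z - p)) = L * ((p - y) \<bullet> (z - p)) + G \<bullet> (z - p)"
    using \<open>L > 0\<close> by (simp only: inner_add_left inner_scaleR_left distrib_left) simp
  ultimately show ?thesis
    by linarith
qed

lemma prox_grad_dc_descent:
  fixes g :: "'a::euclidean_space \<Rightarrow> ereal" and f1 f2 :: "'a \<Rightarrow> real"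
  assumes proper: "proper_fun g" and closed: "closed_fun g" and convex: "convex_fun g"
    and f1_convex: "convex_on UNIV f1" and f2_convex: "convex_on UNIV f2"
    and f1_grad: "\<And>z. (f1 has_derivative (\<lambda>h. f1' z \<bullet> h)) (at z)"
    and f2_grad: "\<And>z. (f2 has_derivative (\<lambda>h. f2' z \<bullet> h)) (at z)"
    and f1_lip: "L-lipschitz_on UNIV f1'" and f2_lip: "l-lipschitz_on UNIV f2'" and "L > 0"
    and p_eq: "p = prox (\<lambda>z. ereal (1 / L) * g z) (y - (1 / L) *\<^sub>R (f1' y - f2' y))"
    and g_p: "g p = ereal a" and g_z: "g z = ereal b"
  shows "f1 p - f2 p + a \<le> f1 z - f2 z + b + (L + l) / 2 * (norm (z - y))\<^sup>2 - L / 2 * (norm (z - p))\<^sup>2"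
proof -
  have "a \<le> b + L * ((p - y) \<bullet> (z - p)) + (f1' y - f2' y) \<bullet> (z - p)"
    by (rule prox_grad_step_optimality[OF proper closed convex \<open>L > 0\<close> p_eq g_p g_z])
  moreover have "f1 p \<le> f1 y + f1' y \<bullet> (p - y) + L / 2 * (norm (p - y))\<^sup>2"
    by (rule lipschitz_gradient_upper_bound[OF f1_grad f1_lip])
  moreover have "f2 y + f2' y \<bullet> (p - y) \<le> f2 p"
    by (rule convex_on_gradient_ineq[OF f2_convex f2_grad])
  moreover have "f1 y + f1' y \<bullet> (z - y) \<le> f1 z"
    by (rule convex_on_gradient_ineq[OF f1_convex f1_grad])
  moreover have "f2 z \<le> f2 y + f2' y \<bullet> (z - y) + l / 2 * (norm (z - y))\<^sup>2"
    by (rule lipschitz_gradient_upper_bound[OF f2_grad f2_lip])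
  moreover have "(norm (z - y))\<^sup>2 = (norm (z - p))\<^sup>2 + 2 * ((p - y) \<bullet> (z - p)) + (norm (p - y))\<^sup>2"
    unfolding power2_norm_eq_inner by (simp add: algebra_simps inner_commute)
  then have "L / 2 * (norm (z - y))\<^sup>2 = L / 2 * (norm (z - p))\<^sup>2 + L * ((p - y) \<bullet> (z - p)) + L / 2 * (norm (p - y))\<^sup>2"
    by (simp only: distrib_left)
  moreover have "(f1' y - f2' y) \<bullet> (z - p)
      = f1' y \<bullet> (z - y) - f1' y \<bullet> (p - y) - f2' y \<bullet> (z - y) + f2' y \<bullet> (p - y)"
    by (simp add: inner_diff_left inner_diff_right)
  moreover have "(L + l) / 2 * (norm (z - y))\<^sup>2 = L / 2 * (norm (z - y))\<^sup>2 + l / 2 * (norm (z - y))\<^sup>2"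
    by (simp add: algebra_simps)
  ultimately show ?thesis
    by linarith
qed

lemma prox_grad_extrapolation_descent:
  fixes g :: "'a::euclidean_space \<Rightarrow> ereal" and f1 f2 :: "'a \<Rightarrow> real"
  assumes g_pcc: "proper_fun g" "closed_fun g" "convex_fun g"
    and f1_convex: "convex_on UNIV f1" and f2_convex: "convex_on UNIV f2"
    and f1_grad: "\<And>z. (f1 has_derivative (\<lambda>h. f1' z \<bullet> h)) (at z)"
    and f2_grad: "\<And>z. (f2 has_derivative (\<lambda>h. f2' z \<bullet> h)) (at z)"
    and f1_lip: "L-lipschitz_on UNIV f1'" and f2_lip: "l-lipschitz_on UNIV f2'"
    and "L > 0" and "\<alpha> \<le> L / 2"
    and p_eq: "p = prox (\<lambda>z. ereal (1 / L) * g z) (y - (1 / L) *\<^sub>R (f1' y - f2' y))"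
    and y_eq: "y = x + \<beta> *\<^sub>R (x - x')"
    and g_p: "g p = ereal a" and g_x: "g x = ereal b"
  shows "f1 p - f2 p + a + \<alpha> * (norm (p - x))\<^sup>2 + (\<alpha> - (L + l) / 2 * \<beta>\<^sup>2) * (norm (x - x'))\<^sup>2
    \<le> f1 x - f2 x + b + \<alpha> * (norm (x - x'))\<^sup>2"
proof -
  have "f1 p - f2 p + a \<le> f1 x - f2 x + b + (L + l) / 2 * (norm (x - y))\<^sup>2 - L / 2 * (norm (x - p))\<^sup>2"
    by (rule prox_grad_dc_descent[OF g_pcc f1_convex f2_convex f1_grad f2_grad f1_lip f2_lip
          \<open>L > 0\<close> p_eq g_p g_x])
  moreover have "(norm (x - y))\<^sup>2 = \<beta>\<^sup>2 * (norm (x - x'))\<^sup>2"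
    by (simp add: y_eq power_mult_distrib)
  moreover have "\<alpha> * (norm (p - x))\<^sup>2 \<le> L / 2 * (norm (x - p))\<^sup>2"
    using mult_right_mono[OF \<open>\<alpha> \<le> L / 2\<close> zero_le_power2] by (simp add: norm_minus_commute)
  ultimately show ?thesis
    by (simp add: algebra_simps)
qed

lemma square_le_SUP_square:
  fixes \<beta> :: "nat \<Rightarrow> real"
  assumes "\<And>k. 0 \<le> \<beta> k \<and> \<beta> k \<le> b"
  shows "(\<beta> k)\<^sup>2 \<le> (SUP k. \<beta> k)\<^sup>2"
  using assms by (intro power_mono cSUP_upper bdd_aboveI[of _ b]) auto

lemma descent_sequence_convergent_summable:
  fixes h d :: "nat \<Rightarrow> real"
  assumes d_nonneg: "\<And>k. 0 \<le> d k" and descent: "\<And>k. h (Suc k) + d k \<le> h k"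
    and bounded: "\<And>k. B \<le> h k"
  shows "convergent h" "summable d"
proof -
  have "decseq h"
  proof (rule decseq_SucI)
    show "h (Suc k) \<le> h k" for k
      using descent[of k] d_nonneg[of k] by linarith
  qed
  then obtain c where "h \<longlonglongrightarrow> c"
    using bounded decseq_convergent by metis
  then show "convergent h"
    by (rule convergentI)
  show "summable d"
  proof (rule summable_comparison_test')
    show "summable (\<lambda>k. h k - h (Suc k))"
      by (rule telescope_summable') fact
    show "norm (d k) \<le> h k - h (Suc k)" for k
      using d_nonneg[of k] descent[of k] by simp
  qed
qed

theorem lemma3p3:
  fixes g :: "'a::euclidean_space \<Rightarrow> ereal"
    and f1 f2 :: "'a \<Rightarrow> real"
    and f1' f2' :: "'a \<Rightarrow> 'a"
    and L l \<alpha> :: real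
    and \<beta> :: "nat \<Rightarrow> real"
    and x :: "nat \<Rightarrow> 'a"
  assumes g_pcc: "proper_fun g" "closed_fun g" "convex_fun g"
    and f1_convex: "convex_on UNIV f1" and f2_convex: "convex_on UNIV f2"
    and f1_grad: "\<And>z. (f1 has_derivative (\<lambda>h. f1' z \<bullet> h)) (at z)"
    and f2_grad: "\<And>z. (f2 has_derivative (\<lambda>h. f2' z \<bullet> h)) (at z)"
    and L_pos: "L > 0" and l_nonneg: "l \<ge> 0" and Ll: "L \<ge> l"
    and f1_lip: "L-lipschitz_on UNIV f1'"
    and f2_lip: "l-lipschitz_on UNIV f2'"
    and F_inf: "(INF z. ereal (f1 z - f2 z) + g z) > -\<infinity>"
    and F_attained: "\<exists>zs. \<forall>z. ereal (f1 zs - f2 zs) + g zs \<le> ereal (f1 z - f2 z) + g z"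
    and x0_dom: "g (x 0) < \<infinity>"
    and \<beta>_range: "\<And>k. 0 \<le> \<beta> k \<and> \<beta> k \<le> sqrt (L / (L + l))"
    and x_iter: "\<And>k. x (Suc k) =
        prox (\<lambda>z. ereal (1 / L) * g z)
          ((x k + \<beta> k *\<^sub>R (x k - x (k - 1)))
           - (1 / L) *\<^sub>R (f1' (x k + \<beta> k *\<^sub>R (x k - x (k - 1)))
                          - f2' (x k + \<beta> k *\<^sub>R (x k - x (k - 1)))))"
    and \<alpha>_range: "(L + l) / 2 * (SUP k. \<beta> k)\<^sup>2 \<le> \<alpha>" "\<alpha> \<le> L / 2"
  shows "(\<exists>c::real. (\<lambda>k. ereal (f1 (x k) - f2 (x k)) + g (x k)
                          + ereal (\<alpha> * (norm (x k - x (k - 1)))\<^sup>2)) \<longlonglongrightarrow> ereal c)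
       \<and> summable (\<lambda>k. (\<alpha> - (L + l) / 2 * (\<beta> (Suc k))\<^sup>2) * (norm (x (Suc k) - x k))\<^sup>2)"
proof -
  define gx where "gx k = real_of_ereal (g (x k))" for k
  have "g (x k) \<noteq> \<infinity>" for k
    using x0_dom prox_in_dom[OF g_pcc, of "1 / L"] L_pos by (cases k) (auto simp: x_iter)
  then have g_x: "g (x k) = ereal (gx k)" for k
    using g_pcc(1) by (metis proper_funE real_of_ereal.simps(1) gx_def)
  define H where "H k = f1 (x k) - f2 (x k) + gx k + \<alpha> * (norm (x k - x (k - 1)))\<^sup>2" for k
  define d where "d k = (\<alpha> - (L + l) / 2 * (\<beta> k)\<^sup>2) * (norm (x k - x (k - 1)))\<^sup>2" for k
  have descent: "H (Suc k) + d k \<le> H k" for k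
    using prox_grad_extrapolation_descent[OF g_pcc f1_convex f2_convex f1_grad f2_grad f1_lip f2_lip
        L_pos \<alpha>_range(2) x_iter refl g_x g_x]
    by (simp add: H_def d_def)
  have "(L + l) / 2 * (\<beta> k)\<^sup>2 \<le> (L + l) / 2 * (SUP k. \<beta> k)\<^sup>2" for k
    using \<beta>_range L_pos l_nonneg by (intro mult_left_mono square_le_SUP_square) auto
  then have \<beta>_sq: "(L + l) / 2 * (\<beta> k)\<^sup>2 \<le> \<alpha>" for k
    using \<alpha>_range(1) order_trans by blast
  then have "0 \<le> \<alpha>"
    using order_trans[OF mult_nonneg_nonneg[of "(L + l) / 2" "(\<beta> 0)\<^sup>2"]] L_pos l_nonneg by simp
  obtain B where B: "ereal B < (INF z. ereal (f1 z - f2 z) + g z)"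
    using ereal_dense2[OF F_inf] by blast
  have H_lower: "B \<le> H k" for k
    using order.strict_trans2[OF B INF_lower[of "x k"]] \<open>0 \<le> \<alpha>\<close> by (simp add: H_def g_x add_increasing2)
  have "0 \<le> d k" for k
    using \<beta>_sq[of k] by (simp add: d_def)
  then have "convergent H" "summable d"
    using descent_sequence_convergent_summable[of d H B] descent H_lower by blast+
  moreover have "(\<lambda>k. ereal (f1 (x k) - f2 (x k)) + g (x k) + ereal (\<alpha> * (norm (x k - x (k - 1)))\<^sup>2)) = (\<lambda>k. ereal (H k))"
    by (simp add: H_def g_x)
  ultimately show ?thesis
    by (auto simp: convergent_def d_def summable_Suc_iff[of d, symmetric])
qed

end
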